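(* In $\mathbf{L}^{\Box}_{\mathrm{pol}}$, if $c \vartriangleright c'$ and $c : (\Gamma ¦ \Theta \vdash \Delta)$, then $c' : (\Gamma ¦ \Theta \vdash \Delta)$.
   Context: $\mathbf{L}^{\Box}_{\mathrm{pol}}$ is a polarised sequent calculus for classical S4 with polarities $+,-,\square$ ($\boxplus\in\{+,\square\}$) and types $\mathbb{1}, A\otimes B, A\oplus B, \Box A, \neg A, A\&B, A⅋B$ ($⅋$ = "par", negative disjunction). Commands $c ::= \langle t\|S\rangle^{\boxplus} \mid \langle V\|e\rangle^-$; $c:(\Gamma¦\Theta\vdash\Delta)$ means $c$ is well-typed with ordinary variables $\Gamma$, modal variables $\Theta$, covariables $\Delta$. The relation $\vartriangleright$ is the deterministic top-level operational semantics: $\langle \mu\alpha^\epsilon.c \| S\rangle^\epsilon \vartriangleright c[S/\alpha]$; $\langle V\|\tilde\mu x^\epsilon.c\rangle^\epsilon \vartriangleright c[V/x]$; $\langle ()\|\tilde\mu().c\rangle^\square\vartriangleright c$; $\langle (V,W)\|\tilde\mu(x,y).c\rangle^\epsilon\vartriangleright c[V/x,W/y]$; $\langle \iota_i V\|\tilde\mu[\iota_1x_1.c_1\mid\iota_2x_2.c_2]\rangle^\epsilon\vartriangleright c_i[V/x_i]$; $\langle\square V\|\tilde\mu\square x.c\rangle^\square\vartriangleright c[V/x]$; $\langle\mu[x].c\|[V]\rangle^-\vartriangleright c[V/x]$; $\langle\mu(\alpha,\beta).c\|(S,S')\rangle^-\vartriangleright c[S/\alpha,S'/\beta]$; $\langle\mu(\alpha_1.c_1,\alpha_2.c_2)\|\pi_iS\rangle^-\vartriangleright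 c_i[S/\alpha_i]$. *)

theory Defs
  imports Main
begin

(* Binding is represented with de Bruijn indices, with three separate
   namespaces: ordinary variables (context Gamma), modal variables
   (context Theta) and covariables (context Delta). *)

datatype pol = PPos | PNeg | PBox

datatype ty =
    One
  | Tensor ty ty
  | Oplus ty ty
  | Bx ty
  | Not ty
  | With ty ty
  | Par ty ty

fun polty :: "ty \<Rightarrow> pol" where
  "polty One = PBox"
| "polty (Tensor A B) = (if polty A = PBox \<and> polty B = PBox then PBox else PPos)"
| "polty (Oplus A B) = (if polty A = PBox \<and> polty B = PBox then PBox else PPos)"
| "polty (Bx A) = PBox"
| "polty (Not A) = PNeg"
| "polty (With A B) = PNeg"
| "polty (Par A B) = PNeg"

datatype tm =
    Var nat
  | MVar nat
  | Mu pol cmd          (* \<mu>\<alpha>^\<epsilon>.c   binds a covariable *)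
  | Unit
  | Pair tm tm
  | Inj1 tm
  | Inj2 tm
  | BoxV tm
  | MuBrk cmd           (* \<mu>[x].c        binds an ordinary variable *)
  | MuPar cmd           (* \<mu>(\<alpha>,\<beta>).c     binds two covariables (\<alpha> = index 0) *)
  | MuWith cmd cmd
and cotm =
    CoVar nat
  | MuT pol cmd         (* \<mu>~x^\<epsilon>.c  binds an ordinary variable *)
  | MuTPair cmd         (* \<mu>~(x,y).c  binds two ordinary variables (x = index 0) *)
  | MuTCase cmd cmd
  | MuTUnit cmd
  | MuTBox cmd          (* \<mu>~Box x.c  binds a modal variable *)
  | Brk tm
  | CoPair cotm cotm
  | Proj1 cotm
  | Proj2 cotm
and cmd =
    Cut pol tm cotm

fun is_value :: "tm \<Rightarrow> bool" where
  "is_value (Var i) = True"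
| "is_value (MVar i) = True"
| "is_value (Mu e c) = (e = PNeg)"
| "is_value Unit = True"
| "is_value (Pair V W) = (is_value V \<and> is_value W)"
| "is_value (Inj1 V) = is_value V"
| "is_value (Inj2 V) = is_value V"
| "is_value (BoxV V) = is_value V"
| "is_value (MuBrk c) = True"
| "is_value (MuPar c) = True"
| "is_value (MuWith c1 c2) = True"

fun is_stack :: "cotm \<Rightarrow> bool" where
  "is_stack (CoVar i) = True"
| "is_stack (MuT e c) = (e \<noteq> PNeg)"
| "is_stack (MuTPair c) = True"
| "is_stack (MuTCase c1 c2) = True"
| "is_stack (MuTUnit c) = True"
| "is_stack (MuTBox c) = True"
| "is_stack (Brk V) = is_value V"
| "is_stack (CoPair S S') = (is_stack S \<and> is_stack S')"
| "is_stack (Proj1 S) = is_stack S"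
| "is_stack (Proj2 S) = is_stack S"

definition lift :: "(nat \<Rightarrow> nat) \<Rightarrow> nat \<Rightarrow> nat" where
  "lift r = (\<lambda>n. case n of 0 \<Rightarrow> 0 | Suc m \<Rightarrow> Suc (r m))"

primrec ren_tm :: "(nat \<Rightarrow> nat) \<Rightarrow> (nat \<Rightarrow> nat) \<Rightarrow> (nat \<Rightarrow> nat) \<Rightarrow> tm \<Rightarrow> tm"
and ren_co :: "(nat \<Rightarrow> nat) \<Rightarrow> (nat \<Rightarrow> nat) \<Rightarrow> (nat \<Rightarrow> nat) \<Rightarrow> cotm \<Rightarrow> cotm"
and ren_cmd :: "(nat \<Rightarrow> nat) \<Rightarrow> (nat \<Rightarrow> nat) \<Rightarrow> (nat \<Rightarrow> nat) \<Rightarrow> cmd \<Rightarrow> cmd" where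
  "ren_tm r m d (Var i) = Var (r i)"
| "ren_tm r m d (MVar i) = MVar (m i)"
| "ren_tm r m d (Mu e c) = Mu e (ren_cmd r m (lift d) c)"
| "ren_tm r m d Unit = Unit"
| "ren_tm r m d (Pair V W) = Pair (ren_tm r m d V) (ren_tm r m d W)"
| "ren_tm r m d (Inj1 V) = Inj1 (ren_tm r m d V)"
| "ren_tm r m d (Inj2 V) = Inj2 (ren_tm r m d V)"
| "ren_tm r m d (BoxV V) = BoxV (ren_tm r m d V)"
| "ren_tm r m d (MuBrk c) = MuBrk (ren_cmd (lift r) m d c)"
| "ren_tm r m d (MuPar c) = MuPar (ren_cmd r m (lift (lift d)) c)"
| "ren_tm r m d (MuWith c1 c2) = MuWith (ren_cmd r m (lift d) c1) (ren_cmd r m (lift d) c2)"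
| "ren_co r m d (CoVar i) = CoVar (d i)"
| "ren_co r m d (MuT e c) = MuT e (ren_cmd (lift r) m d c)"
| "ren_co r m d (MuTPair c) = MuTPair (ren_cmd (lift (lift r)) m d c)"
| "ren_co r m d (MuTCase c1 c2) = MuTCase (ren_cmd (lift r) m d c1) (ren_cmd (lift r) m d c2)"
| "ren_co r m d (MuTUnit c) = MuTUnit (ren_cmd r m d c)"
| "ren_co r m d (MuTBox c) = MuTBox (ren_cmd r (lift m) d c)"
| "ren_co r m d (Brk V) = Brk (ren_tm r m d V)"
| "ren_co r m d (CoPair S S') = CoPair (ren_co r m d S) (ren_co r m d S')"
| "ren_co r m d (Proj1 S) = Proj1 (ren_co r m d S)"
| "ren_co r m d (Proj2 S) = Proj2 (ren_co r m d S)"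
| "ren_cmd r m d (Cut e t k) = Cut e (ren_tm r m d t) (ren_co r m d k)"

definition scons :: "'a \<Rightarrow> (nat \<Rightarrow> 'a) \<Rightarrow> nat \<Rightarrow> 'a" where
  "scons x f = (\<lambda>n. case n of 0 \<Rightarrow> x | Suc m \<Rightarrow> f m)"

definition upG_s :: "(nat \<Rightarrow> tm) \<Rightarrow> nat \<Rightarrow> tm" where
  "upG_s s = scons (Var 0) (\<lambda>i. ren_tm Suc id id (s i))"
definition upG_t :: "(nat \<Rightarrow> tm) \<Rightarrow> nat \<Rightarrow> tm" where
  "upG_t th = (\<lambda>i. ren_tm Suc id id (th i))"
definition upG_d :: "(nat \<Rightarrow> cotm) \<Rightarrow> nat \<Rightarrow> cotm" where
  "upG_d d = (\<lambda>i. ren_co Suc id id (d i))"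

definition upM_s :: "(nat \<Rightarrow> tm) \<Rightarrow> nat \<Rightarrow> tm" where
  "upM_s s = (\<lambda>i. ren_tm id Suc id (s i))"
definition upM_t :: "(nat \<Rightarrow> tm) \<Rightarrow> nat \<Rightarrow> tm" where
  "upM_t th = scons (MVar 0) (\<lambda>i. ren_tm id Suc id (th i))"
definition upM_d :: "(nat \<Rightarrow> cotm) \<Rightarrow> nat \<Rightarrow> cotm" where
  "upM_d d = (\<lambda>i. ren_co id Suc id (d i))"

definition upD_s :: "(nat \<Rightarrow> tm) \<Rightarrow> nat \<Rightarrow> tm" where
  "upD_s s = (\<lambda>i. ren_tm id id Suc (s i))"
definition upD_t :: "(nat \<Rightarrow> tm) \<Rightarrow> nat \<Rightarrow> tm" where
  "upD_t th = (\<lambda>i. ren_tm id id Suc (th i))"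
definition upD_d :: "(nat \<Rightarrow> cotm) \<Rightarrow> nat \<Rightarrow> cotm" where
  "upD_d d = scons (CoVar 0) (\<lambda>i. ren_co id id Suc (d i))"

primrec sub_tm :: "(nat \<Rightarrow> tm) \<Rightarrow> (nat \<Rightarrow> tm) \<Rightarrow> (nat \<Rightarrow> cotm) \<Rightarrow> tm \<Rightarrow> tm"
and sub_co :: "(nat \<Rightarrow> tm) \<Rightarrow> (nat \<Rightarrow> tm) \<Rightarrow> (nat \<Rightarrow> cotm) \<Rightarrow> cotm \<Rightarrow> cotm"
and sub_cmd :: "(nat \<Rightarrow> tm) \<Rightarrow> (nat \<Rightarrow> tm) \<Rightarrow> (nat \<Rightarrow> cotm) \<Rightarrow> cmd \<Rightarrow> cmd" where
  "sub_tm s th d (Var i) = s i"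
| "sub_tm s th d (MVar i) = th i"
| "sub_tm s th d (Mu e c) = Mu e (sub_cmd (upD_s s) (upD_t th) (upD_d d) c)"
| "sub_tm s th d Unit = Unit"
| "sub_tm s th d (Pair V W) = Pair (sub_tm s th d V) (sub_tm s th d W)"
| "sub_tm s th d (Inj1 V) = Inj1 (sub_tm s th d V)"
| "sub_tm s th d (Inj2 V) = Inj2 (sub_tm s th d V)"
| "sub_tm s th d (BoxV V) = BoxV (sub_tm s th d V)"
| "sub_tm s th d (MuBrk c) = MuBrk (sub_cmd (upG_s s) (upG_t th) (upG_d d) c)"
| "sub_tm s th d (MuPar c) =
     MuPar (sub_cmd (upD_s (upD_s s)) (upD_t (upD_t th)) (upD_d (upD_d d)) c)"
| "sub_tm s th d (MuWith c1 c2) =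
     MuWith (sub_cmd (upD_s s) (upD_t th) (upD_d d) c1) (sub_cmd (upD_s s) (upD_t th) (upD_d d) c2)"
| "sub_co s th d (CoVar i) = d i"
| "sub_co s th d (MuT e c) = MuT e (sub_cmd (upG_s s) (upG_t th) (upG_d d) c)"
| "sub_co s th d (MuTPair c) =
     MuTPair (sub_cmd (upG_s (upG_s s)) (upG_t (upG_t th)) (upG_d (upG_d d)) c)"
| "sub_co s th d (MuTCase c1 c2) =
     MuTCase (sub_cmd (upG_s s) (upG_t th) (upG_d d) c1) (sub_cmd (upG_s s) (upG_t th) (upG_d d) c2)"
| "sub_co s th d (MuTUnit c) = MuTUnit (sub_cmd s th d c)"
| "sub_co s th d (MuTBox c) = MuTBox (sub_cmd (upM_s s) (upM_t th) (upM_d d) c)"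
| "sub_co s th d (Brk V) = Brk (sub_tm s th d V)"
| "sub_co s th d (CoPair S S') = CoPair (sub_co s th d S) (sub_co s th d S')"
| "sub_co s th d (Proj1 S) = Proj1 (sub_co s th d S)"
| "sub_co s th d (Proj2 S) = Proj2 (sub_co s th d S)"
| "sub_cmd s th d (Cut e t k) = Cut e (sub_tm s th d t) (sub_co s th d k)"

(* the substitutions used by the operational semantics; the bound
   variable is always index 0 (and index 1 for the second of a pair) *)
definition substD :: "cmd \<Rightarrow> cotm \<Rightarrow> cmd" where
  "substD c S = sub_cmd Var MVar (scons S CoVar) c"
definition substD2 :: "cmd \<Rightarrow> cotm \<Rightarrow> cotm \<Rightarrow> cmd" where
  "substD2 c S S' = sub_cmd Var MVar (scons S (scons S' CoVar)) c"
definition substG :: "cmd \<Rightarrow> tm \<Rightarrow> cmd" where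
  "substG c V = sub_cmd (scons V Var) MVar CoVar c"
definition substG2 :: "cmd \<Rightarrow> tm \<Rightarrow> tm \<Rightarrow> cmd" where
  "substG2 c V W = sub_cmd (scons V (scons W Var)) MVar CoVar c"
definition substM :: "cmd \<Rightarrow> tm \<Rightarrow> cmd" where
  "substM c V = sub_cmd Var (scons V MVar) CoVar c"

(* typing:  tm_typ G T D t A  is  G | T |- t : A | D ;
            co_typ G T D e A  is  G | T | e : A |- D ;
            cmd_typ G T D c   is  c : (G | T |- D) *)
inductive tm_typ :: "ty list \<Rightarrow> ty list \<Rightarrow> ty list \<Rightarrow> tm \<Rightarrow> ty \<Rightarrow> bool"
and co_typ :: "ty list \<Rightarrow> ty list \<Rightarrow> ty list \<Rightarrow> cotm \<Rightarrow> ty \<Rightarrow> bool"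
and cmd_typ :: "ty list \<Rightarrow> ty list \<Rightarrow> ty list \<Rightarrow> cmd \<Rightarrow> bool" where
  T_Var: "i < length G \<Longrightarrow> tm_typ G T D (Var i) (G ! i)"
| T_MVar: "i < length T \<Longrightarrow> tm_typ G T D (MVar i) (T ! i)"
| T_Mu: "polty A = e \<Longrightarrow> cmd_typ G T (A # D) c \<Longrightarrow> tm_typ G T D (Mu e c) A"
| T_Unit: "tm_typ G T D Unit One"
| T_Pair: "is_value V \<Longrightarrow> is_value W \<Longrightarrow> tm_typ G T D V A \<Longrightarrow> tm_typ G T D W B
     \<Longrightarrow> tm_typ G T D (Pair V W) (Tensor A B)"
| T_Inj1: "is_value V \<Longrightarrow> tm_typ G T D V A \<Longrightarrow> tm_typ G T D (Inj1 V) (Oplus A B)"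
| T_Inj2: "is_value V \<Longrightarrow> tm_typ G T D V B \<Longrightarrow> tm_typ G T D (Inj2 V) (Oplus A B)"
| T_Box: "is_value V \<Longrightarrow> tm_typ [] T [] V A \<Longrightarrow> tm_typ G T D (BoxV V) (Bx A)"
| T_MuBrk: "cmd_typ (A # G) T D c \<Longrightarrow> tm_typ G T D (MuBrk c) (Not A)"
| T_MuPar: "cmd_typ G T (A # B # D) c \<Longrightarrow> tm_typ G T D (MuPar c) (Par A B)"
| T_MuWith: "cmd_typ G T (A # D) c1 \<Longrightarrow> cmd_typ G T (B # D) c2
     \<Longrightarrow> tm_typ G T D (MuWith c1 c2) (With A B)"
| C_CoVar: "i < length D \<Longrightarrow> co_typ G T D (CoVar i) (D ! i)"
| C_MuT: "polty A = e \<Longrightarrow> cmd_typ (A # G) T D c \<Longrightarrow> co_typ G T D (MuT e c) A"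
| C_MuTPair: "cmd_typ (A # B # G) T D c \<Longrightarrow> co_typ G T D (MuTPair c) (Tensor A B)"
| C_MuTCase: "cmd_typ (A # G) T D c1 \<Longrightarrow> cmd_typ (B # G) T D c2
     \<Longrightarrow> co_typ G T D (MuTCase c1 c2) (Oplus A B)"
| C_MuTUnit: "cmd_typ G T D c \<Longrightarrow> co_typ G T D (MuTUnit c) One"
| C_MuTBox: "cmd_typ G (A # T) D c \<Longrightarrow> co_typ G T D (MuTBox c) (Bx A)"
| C_Brk: "is_value V \<Longrightarrow> tm_typ G T D V A \<Longrightarrow> co_typ G T D (Brk V) (Not A)"
| C_CoPair: "is_stack S \<Longrightarrow> is_stack S' \<Longrightarrow> co_typ G T D S A \<Longrightarrow> co_typ G T D S' B
     \<Longrightarrow> co_typ G T D (CoPair S S') (Par A B)"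
| C_Proj1: "is_stack S \<Longrightarrow> co_typ G T D S A \<Longrightarrow> co_typ G T D (Proj1 S) (With A B)"
| C_Proj2: "is_stack S \<Longrightarrow> co_typ G T D S B \<Longrightarrow> co_typ G T D (Proj2 S) (With A B)"
| Cut_Pos: "e \<noteq> PNeg \<Longrightarrow> polty A = e \<Longrightarrow> is_stack S \<Longrightarrow> tm_typ G T D t A \<Longrightarrow> co_typ G T D S A
     \<Longrightarrow> cmd_typ G T D (Cut e t S)"
| Cut_Neg: "polty A = PNeg \<Longrightarrow> is_value V \<Longrightarrow> tm_typ G T D V A \<Longrightarrow> co_typ G T D k A
     \<Longrightarrow> cmd_typ G T D (Cut PNeg V k)"

inductive red :: "cmd \<Rightarrow> cmd \<Rightarrow> bool" where
  R_Mu: "is_stack S \<Longrightarrow> red (Cut e (Mu e c) S) (substD c S)"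
| R_MuT: "is_value V \<Longrightarrow> red (Cut e V (MuT e c)) (substG c V)"
| R_Unit: "red (Cut PBox Unit (MuTUnit c)) c"
| R_Pair: "is_value V \<Longrightarrow> is_value W \<Longrightarrow> red (Cut e (Pair V W) (MuTPair c)) (substG2 c V W)"
| R_Inj1: "is_value V \<Longrightarrow> red (Cut e (Inj1 V) (MuTCase c1 c2)) (substG c1 V)"
| R_Inj2: "is_value V \<Longrightarrow> red (Cut e (Inj2 V) (MuTCase c1 c2)) (substG c2 V)"
| R_Box: "is_value V \<Longrightarrow> red (Cut PBox (BoxV V) (MuTBox c)) (substM c V)"
| R_Brk: "is_value V \<Longrightarrow> red (Cut PNeg (MuBrk c) (Brk V)) (substG c V)"
| R_Par: "is_stack S \<Longrightarrow> is_stack S' \<Longrightarrow> red (Cut PNeg (MuPar c) (CoPair S S')) (substD2 c S S')"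
| R_Proj1: "is_stack S \<Longrightarrow> red (Cut PNeg (MuWith c1 c2) (Proj1 S)) (substD c1 S)"
| R_Proj2: "is_stack S \<Longrightarrow> red (Cut PNeg (MuWith c1 c2) (Proj2 S)) (substD c2 S)"

end

theory Submission
  imports Defs
begin

text \<open>Each reduction contracts a cut between a constructor and the matching pattern-matching
  binder. Inverting the typing of the redex types the body of the binder and the components of
  the constructor, and the reduct is the body with those components substituted for the bound
  (co)variables. So the theorem reduces to the substitution lemma: a simultaneous substitution of
  well-typed values for variables and well-typed stacks for covariables preserves typing, where
  modal variables may only receive values typed without ordinary variables and covariables,
  which is what makes the case of a box go through. Pushing a substitution under a binder
  shifts it, so the substitution lemma rests on the corresponding renaming lemma.\<close>

lemma is_value_ren_tm [simp]: "is_value (ren_tm r m d t) = is_value t"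
  by (induction t) auto

lemma is_stack_ren_co [simp]: "is_stack (ren_co r m d k) = is_stack k"
  by (induction k) auto

definition ren_ctx :: "ty list \<Rightarrow> (nat \<Rightarrow> nat) \<Rightarrow> ty list \<Rightarrow> bool" where
  "ren_ctx G r G' \<longleftrightarrow> (\<forall>i<length G. r i < length G' \<and> G' ! r i = G ! i)"

lemma ren_ctx_lift: "ren_ctx G r G' \<Longrightarrow> ren_ctx (A # G) (lift r) (A # G')"
  by (auto simp: ren_ctx_def lift_def nth_Cons split: nat.splits)

lemma ren_ctx_Nil [simp]: "ren_ctx [] r G'"
  by (simp add: ren_ctx_def)

lemma ren_ctx_id [simp]: "ren_ctx G id G"
  by (simp add: ren_ctx_def)

lemma ren_ctx_Suc [simp]: "ren_ctx G Suc (A # G)"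
  by (simp add: ren_ctx_def)

lemma ren_preserves_typ:
  "tm_typ G T D t A \<Longrightarrow> ren_ctx G r G' \<Longrightarrow> ren_ctx T m T' \<Longrightarrow> ren_ctx D d D'
     \<Longrightarrow> tm_typ G' T' D' (ren_tm r m d t) A"
  "co_typ G T D k A \<Longrightarrow> ren_ctx G r G' \<Longrightarrow> ren_ctx T m T' \<Longrightarrow> ren_ctx D d D'
     \<Longrightarrow> co_typ G' T' D' (ren_co r m d k) A"
  "cmd_typ G T D c \<Longrightarrow> ren_ctx G r G' \<Longrightarrow> ren_ctx T m T' \<Longrightarrow> ren_ctx D d D'
     \<Longrightarrow> cmd_typ G' T' D' (ren_cmd r m d c)"
proof (induction arbitrary: G' T' D' r m d and G' T' D' r m d and G' T' D' r m d
       rule: tm_typ_co_typ_cmd_typ.inducts)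
  case (T_Var i G T D)
  then show ?case unfolding ren_ctx_def by (metis ren_tm.simps(1) tm_typ_co_typ_cmd_typ.T_Var)
next
  case (T_MVar i T G D)
  then show ?case unfolding ren_ctx_def by (metis ren_tm.simps(2) tm_typ_co_typ_cmd_typ.T_MVar)
next
  case (C_CoVar i D G T)
  then show ?case unfolding ren_ctx_def by (metis ren_co.simps(1) tm_typ_co_typ_cmd_typ.C_CoVar)
qed (fastforce intro: tm_typ_co_typ_cmd_typ.intros ren_ctx_lift)+

lemma lift_id [simp]: "lift id = id"
  by (auto simp: lift_def split: nat.splits)

lemma ren_id [simp]:
  "ren_tm id id id t = t" "ren_co id id id k = k" "ren_cmd id id id c = c"
  by (induction t and k and c) (simp_all add: lift_id[unfolded id_def])

lemma tm_typ_weaken: "tm_typ [] T [] t A \<Longrightarrow> tm_typ G T D t A"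
  using ren_preserves_typ(1)[of "[]" T "[]" t A id G id T id D] by simp

lemma is_value_sub_tm:
  assumes "\<forall>i. is_value (s i)" and "\<forall>i. is_value (th i)"
  shows "is_value t \<Longrightarrow> is_value (sub_tm s th d t)"
  using assms by (induction t) auto

lemma is_stack_sub_co:
  assumes "\<forall>i. is_value (s i)" and "\<forall>i. is_value (th i)" and "\<forall>i. is_stack (d i)"
  shows "is_stack k \<Longrightarrow> is_stack (sub_co s th d k)"
  using assms by (induction k) (simp_all add: is_value_sub_tm)

definition subst_ok :: "ty list \<Rightarrow> ty list \<Rightarrow> ty list
    \<Rightarrow> (nat \<Rightarrow> tm) \<Rightarrow> (nat \<Rightarrow> tm) \<Rightarrow> (nat \<Rightarrow> cotm) \<Rightarrow> ty list \<Rightarrow> ty list \<Rightarrow> ty list \<Rightarrow> bool" where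
  "subst_ok G T D s th d G' T' D' \<longleftrightarrow>
    (\<forall>i<length G. tm_typ G' T' D' (s i) (G ! i)) \<and>
    (\<forall>i<length T. tm_typ [] T' [] (th i) (T ! i)) \<and>
    (\<forall>i<length D. co_typ G' T' D' (d i) (D ! i)) \<and>
    (\<forall>i. is_value (s i)) \<and> (\<forall>i. is_value (th i)) \<and> (\<forall>i. is_stack (d i))"

lemma subst_ok_upG:
  assumes "subst_ok G T D s th d G' T' D'"
  shows "subst_ok (A # G) T D (upG_s s) (upG_t th) (upG_d d) (A # G') T' D'"
  using assms ren_preserves_typ(1,2)[OF _ ren_ctx_Suc ren_ctx_id ren_ctx_id]
    ren_preserves_typ(1)[OF _ ren_ctx_Nil ren_ctx_id ren_ctx_Nil]
  by (auto simp: subst_ok_def upG_s_def upG_t_def upG_d_def scons_def nth_Cons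
      intro: tm_typ_co_typ_cmd_typ.T_Var[of 0 "A # G'", simplified] split: nat.splits)

lemma subst_ok_upM:
  assumes "subst_ok G T D s th d G' T' D'"
  shows "subst_ok G (A # T) D (upM_s s) (upM_t th) (upM_d d) G' (A # T') D'"
  using assms ren_preserves_typ(1,2)[OF _ ren_ctx_id ren_ctx_Suc ren_ctx_id]
    ren_preserves_typ(1)[OF _ ren_ctx_Nil ren_ctx_Suc ren_ctx_Nil]
  by (auto simp: subst_ok_def upM_s_def upM_t_def upM_d_def scons_def nth_Cons
      intro: tm_typ_co_typ_cmd_typ.T_MVar[of 0 "A # T'", simplified] split: nat.splits)

lemma subst_ok_upD:
  assumes "subst_ok G T D s th d G' T' D'"
  shows "subst_ok G T (A # D) (upD_s s) (upD_t th) (upD_d d) G' T' (A # D')"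
  using assms ren_preserves_typ(1,2)[OF _ ren_ctx_id ren_ctx_id ren_ctx_Suc]
    ren_preserves_typ(1)[OF _ ren_ctx_Nil ren_ctx_id ren_ctx_Nil]
  by (auto simp: subst_ok_def upD_s_def upD_t_def upD_d_def scons_def nth_Cons
      intro: tm_typ_co_typ_cmd_typ.C_CoVar[of 0 "A # D'", simplified] split: nat.splits)

lemma subst_ok_box: "subst_ok G T D s th d G' T' D' \<Longrightarrow> subst_ok [] T [] s th d [] T' []"
  by (simp add: subst_ok_def)

lemma subst_ok_is_value:
  "subst_ok G T D s th d G' T' D' \<Longrightarrow> is_value t \<Longrightarrow> is_value (sub_tm s th d t)"
  by (simp add: subst_ok_def is_value_sub_tm)

lemma subst_ok_is_stack:
  "subst_ok G T D s th d G' T' D' \<Longrightarrow> is_stack k \<Longrightarrow> is_stack (sub_co s th d k)"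
  by (simp add: subst_ok_def is_stack_sub_co)

lemma sub_preserves_typ:
  "tm_typ G T D t A \<Longrightarrow> subst_ok G T D s th d G' T' D' \<Longrightarrow> tm_typ G' T' D' (sub_tm s th d t) A"
  "co_typ G T D k A \<Longrightarrow> subst_ok G T D s th d G' T' D' \<Longrightarrow> co_typ G' T' D' (sub_co s th d k) A"
  "cmd_typ G T D c \<Longrightarrow> subst_ok G T D s th d G' T' D' \<Longrightarrow> cmd_typ G' T' D' (sub_cmd s th d c)"
proof (induction arbitrary: G' T' D' s th d and G' T' D' s th d and G' T' D' s th d
       rule: tm_typ_co_typ_cmd_typ.inducts)
  case (T_Var i G T D)
  then show ?case by (simp add: subst_ok_def)
next
  case (T_MVar i T G D)
  then show ?case by (simp add: subst_ok_def tm_typ_weaken)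
next
  case (C_CoVar i D G T)
  then show ?case by (simp add: subst_ok_def)
qed (fastforce intro: tm_typ_co_typ_cmd_typ.intros subst_ok_upG subst_ok_upM subst_ok_upD
       subst_ok_box subst_ok_is_value subst_ok_is_stack)+

lemma subst_ok_id: "subst_ok G T D Var MVar CoVar G T D"
  by (simp add: subst_ok_def tm_typ_co_typ_cmd_typ.T_Var tm_typ_co_typ_cmd_typ.T_MVar
      tm_typ_co_typ_cmd_typ.C_CoVar)

lemma subst_ok_scons_G:
  "subst_ok G T D s th d G' T' D' \<Longrightarrow> is_value V \<Longrightarrow> tm_typ G' T' D' V A
     \<Longrightarrow> subst_ok (A # G) T D (scons V s) th d G' T' D'"
  by (simp add: subst_ok_def scons_def nth_Cons split: nat.split)

lemma subst_ok_scons_T: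
  "subst_ok G T D s th d G' T' D' \<Longrightarrow> is_value V \<Longrightarrow> tm_typ [] T' [] V A
     \<Longrightarrow> subst_ok G (A # T) D s (scons V th) d G' T' D'"
  by (simp add: subst_ok_def scons_def nth_Cons split: nat.split)

lemma subst_ok_scons_D:
  "subst_ok G T D s th d G' T' D' \<Longrightarrow> is_stack S \<Longrightarrow> co_typ G' T' D' S A
     \<Longrightarrow> subst_ok G T (A # D) s th (scons S d) G' T' D'"
  by (simp add: subst_ok_def scons_def nth_Cons split: nat.split)

lemma cmd_typ_substG:
  "cmd_typ (A # G) T D c \<Longrightarrow> is_value V \<Longrightarrow> tm_typ G T D V A \<Longrightarrow> cmd_typ G T D (substG c V)"
  unfolding substG_def by (blast intro: sub_preserves_typ(3) subst_ok_scons_G subst_ok_id)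

lemma cmd_typ_substG2:
  "cmd_typ (A # B # G) T D c \<Longrightarrow> is_value V \<Longrightarrow> is_value W
     \<Longrightarrow> tm_typ G T D V A \<Longrightarrow> tm_typ G T D W B \<Longrightarrow> cmd_typ G T D (substG2 c V W)"
  unfolding substG2_def by (blast intro: sub_preserves_typ(3) subst_ok_scons_G subst_ok_id)

lemma cmd_typ_substM:
  "cmd_typ G (A # T) D c \<Longrightarrow> is_value V \<Longrightarrow> tm_typ [] T [] V A \<Longrightarrow> cmd_typ G T D (substM c V)"
  unfolding substM_def by (blast intro: sub_preserves_typ(3) subst_ok_scons_T subst_ok_id)

lemma cmd_typ_substD:
  "cmd_typ G T (A # D) c \<Longrightarrow> is_stack S \<Longrightarrow> co_typ G T D S A \<Longrightarrow> cmd_typ G T D (substD c S)"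
  unfolding substD_def by (blast intro: sub_preserves_typ(3) subst_ok_scons_D subst_ok_id)

lemma cmd_typ_substD2:
  "cmd_typ G T (A # B # D) c \<Longrightarrow> is_stack S \<Longrightarrow> is_stack S'
     \<Longrightarrow> co_typ G T D S A \<Longrightarrow> co_typ G T D S' B \<Longrightarrow> cmd_typ G T D (substD2 c S S')"
  unfolding substD2_def by (blast intro: sub_preserves_typ(3) subst_ok_scons_D subst_ok_id)

inductive_cases cmd_typ_CutE: "cmd_typ G T D (Cut e t k)"

inductive_cases tm_typ_inversions:
  "tm_typ G T D (Mu e c) A" "tm_typ G T D (Pair V W) A" "tm_typ G T D (Inj1 V) A"
  "tm_typ G T D (Inj2 V) A" "tm_typ G T D (BoxV V) A" "tm_typ G T D (MuBrk c) A"
  "tm_typ G T D (MuPar c) A" "tm_typ G T D (MuWith c1 c2) A"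

inductive_cases co_typ_inversions:
  "co_typ G T D (MuT e c) A" "co_typ G T D (MuTPair c) A" "co_typ G T D (MuTCase c1 c2) A"
  "co_typ G T D (MuTUnit c) A" "co_typ G T D (MuTBox c) A" "co_typ G T D (Brk V) A"
  "co_typ G T D (CoPair S S') A" "co_typ G T D (Proj1 S) A" "co_typ G T D (Proj2 S) A"

theorem mainTheorem3:
  assumes "red c c'"
    and "cmd_typ G T D c"
  shows "cmd_typ G T D c'"
  using assms
  by (induction rule: red.induct)
    (auto elim!: cmd_typ_CutE tm_typ_inversions co_typ_inversions
      intro: cmd_typ_substG cmd_typ_substG2 cmd_typ_substM cmd_typ_substD cmd_typ_substD2)

end
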